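(* Let $(\mathbb{X},\mathcal{A},\pi)$ be a probability space and let $T$ be a transition kernel on $\mathbb{X}$ (i.e. $T\colon \mathbb{X}\times\mathcal{A}\to[0,1]$ with $A\mapsto T(x,A)$ a probability measure for every $x\in\mathbb{X}$ and $x\mapsto T(x,A)$ measurable for every $A\in\mathcal{A}$) which preserves $\pi$, i.e. $\pi T=\pi$. Let $1\le p\le q$. Suppose that for all $f\in L^p(\pi)$, $$\|Tf\|_q\le \|f\|_p.$$ Then for every probability measure $\mu$ on $(\mathbb{X},\mathcal{A})$, $$\mathrm{H}(\mu T\,|\,\pi)\le \frac{p}{q}\,\mathrm{H}(\mu\,|\,\pi).$$
   Context: For a probability measure $\mu$ on $(\mathbb{X},\mathcal{A})$, $\mu T$ is the probability measure $(\mu T)(A)=\int_{\mathbb{X}} T(x,A)\,\mu(\mathrm{d}x)$. For a measurable function $f$, $Tf(x)=\int_{\mathbb{X}} f(y)\,T(x,\mathrm{d}y)$ (for signed $f$, by linearity whenever $Tf_+$ or $Tf_-$ is finite). $\|f\|_r=\left(\int |f|^r\,\mathrm{d}\pi\right)^{1/r}$. $\mathrm{H}(\mu\,|\,\pi)$ is the Kullback–Leibler divergence: $\mathrm{H}(\mu\,|\,\pi)=\int \log\left(\frac{\mathrm{d}\mu}{\mathrm{d}\pi}\right)\mathrm{d}\mu$ if $\mu\ll\pi$, and $+\infty$ otherwise. No reversibility or regularity of $T$ is assumed. *)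

theory Defs
  imports "HOL-Probability.Probability"
begin

definition Lnorm :: "'a measure \<Rightarrow> real \<Rightarrow> ('a \<Rightarrow> real) \<Rightarrow> ennreal" where
  "Lnorm M r f =
     (let I = (\<integral>\<^sup>+ x. ennreal (\<bar>f x\<bar> powr r) \<partial>M)
      in if I = \<infinity> then \<infinity> else ennreal (enn2real I powr (1 / r)))"

definition kernel_fun :: "('a \<Rightarrow> 'a measure) \<Rightarrow> ('a \<Rightarrow> real) \<Rightarrow> 'a \<Rightarrow> real" where
  "kernel_fun T f x = (\<integral> y. f y \<partial>(T x))"

text \<open>If mu is absolutely continuous w.r.t. pi, with density rho, it is the integral of
  rho ln rho w.r.t. pi (positive part minus negative part; the negative part is bounded
  by 1/e); otherwise it is +infinity.\<close>
definition KL :: "'a measure \<Rightarrow> 'a measure \<Rightarrow> ereal" where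
  "KL \<mu> \<pi> =
     (if absolutely_continuous \<pi> \<mu> \<and> sets \<mu> = sets \<pi> then
        (let \<rho> = (\<lambda>x. enn2real (RN_deriv \<pi> \<mu> x));
             g = (\<lambda>x. \<rho> x * ln (\<rho> x))
         in enn2ereal (\<integral>\<^sup>+ x. ennreal (g x) \<partial>\<pi>) - enn2ereal (\<integral>\<^sup>+ x. ennreal (- g x) \<partial>\<pi>))
      else \<infinity>)"

end

theory Submission
  imports Defs
begin

text \<open>
  Let \<open>\<rho>\<close> and \<open>\<sigma>\<close> be the densities of \<open>\<mu>\<close> and \<open>\<mu>T\<close> with respect to \<open>\<pi>\<close>, fix \<open>\<epsilon> > 0\<close> and
  put \<open>g = (\<sigma> + \<epsilon>) powr (1/p)\<close>, so that \<open>\<integral> g^p d\<pi> = 1 + \<epsilon>\<close>. Since \<open>\<mu>T\<close> integrates a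
  function \<open>f\<close> as \<open>x \<mapsto> \<integral> f dT(x,\<cdot>)\<close> against \<open>\<mu>\<close>, Jensen's inequality for the logarithm inside
  every \<open>T(x,\<cdot>)\<close> gives \<open>\<integral> \<sigma> ln \<sigma> d\<pi> \<le> \<integral> ln (\<sigma> + \<epsilon>) d\<mu>T \<le> p \<integral> ln (Tg) d\<mu>\<close>.
  Young's inequality \<open>r t \<le> r ln r + exp t - r\<close> with \<open>t = q ln (Tg)\<close> bounds
  \<open>q \<integral> ln (Tg) d\<mu> = \<integral> \<rho> t d\<pi>\<close> by \<open>H(\<mu>|\<pi>) + \<integral> (Tg)^q d\<pi> - 1\<close>, and hypercontractivity bounds
  \<open>\<integral> (Tg)^q d\<pi>\<close> by \<open>(1 + \<epsilon>) powr (q/p)\<close>. Letting \<open>\<epsilon> \<rightarrow> 0\<close> gives the claim. The shift by \<open>\<epsilon>\<close>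
  keeps all logarithms bounded below, which makes every integral in the chain well defined.
\<close>

lemma mult_le_xlnx_exp:
  fixes r t :: real
  assumes "0 \<le> r"
  shows "r * t \<le> r * ln r + exp t - r"
proof (cases "r = 0")
  case False
  with assms have r: "0 < r" by simp
  have "t - ln r + 1 \<le> exp (t - ln r)" using exp_ge_add_one_self[of "t - ln r"] by linarith
  also have "\<dots> = exp t / r" using r by (simp add: exp_diff)
  finally have "r * (t - ln r + 1) \<le> exp t" using r by (simp add: field_simps)
  then show ?thesis by (simp add: algebra_simps)
qed simp

lemma xlnx_ge_minus_one:
  fixes x :: real
  assumes "0 \<le> x"
  shows "- 1 \<le> x * ln x"
  using mult_le_xlnx_exp[OF assms, of "- 1"] exp_le_one_iff[of "- 1"] by linarith

lemma powr_le_one_plus: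
  fixes z s :: real
  assumes "0 \<le> z" "0 \<le> s" "s \<le> 1"
  shows "z powr s \<le> 1 + z"
proof (cases "z \<le> 1")
  case True
  then have "z powr s \<le> 1 powr s" using assms by (intro powr_mono2) auto
  then show ?thesis using assms by simp
next
  case False
  then have "z powr s \<le> z powr 1" using assms by (intro powr_mono) auto
  then show ?thesis using False by simp
qed

lemma integral_mult_le_xlnx_exp:
  fixes \<rho> \<phi> :: "'a \<Rightarrow> real"
  assumes [measurable]: "\<rho> \<in> borel_measurable M" "\<phi> \<in> borel_measurable M"
    and nonneg: "\<And>x. 0 \<le> \<rho> x"
    and int: "integrable M \<rho>" "integrable M (\<lambda>x. \<rho> x * ln (\<rho> x))" "integrable M (\<lambda>x. exp (\<phi> x))"
    and lower: "AE x in M. c \<le> \<phi> x"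
  shows "integrable M (\<lambda>x. \<rho> x * \<phi> x)"
    and "(\<integral>x. \<rho> x * \<phi> x \<partial>M) \<le> (\<integral>x. \<rho> x * ln (\<rho> x) \<partial>M) + (\<integral>x. exp (\<phi> x) \<partial>M) - (\<integral>x. \<rho> x \<partial>M)"
proof -
  have upper: "\<rho> x * \<phi> x \<le> \<rho> x * ln (\<rho> x) + exp (\<phi> x) - \<rho> x" for x
    using mult_le_xlnx_exp[OF nonneg] .
  show "integrable M (\<lambda>x. \<rho> x * \<phi> x)"
  proof (rule Bochner_Integration.integrable_bound)
    show "integrable M (\<lambda>x. \<bar>\<rho> x * ln (\<rho> x)\<bar> + exp (\<phi> x) + (1 + \<bar>c\<bar>) * \<rho> x)"
      using int by auto
    show "AE x in M. norm (\<rho> x * \<phi> x) \<le> norm (\<bar>\<rho> x * ln (\<rho> x)\<bar> + exp (\<phi> x) + (1 + \<bar>c\<bar>) * \<rho> x)"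
      using lower
    proof eventually_elim
      case (elim x)
      have "- (\<bar>c\<bar> * \<rho> x) \<le> \<rho> x * \<phi> x"
        using mult_left_mono[OF elim nonneg[of x]] mult_right_mono[OF abs_ge_minus_self[of c] nonneg[of x]]
        by (simp add: mult.commute)
      moreover have "0 \<le> \<bar>c\<bar> * \<rho> x" using nonneg[of x] by simp
      moreover have "\<rho> x * ln (\<rho> x) \<le> \<bar>\<rho> x * ln (\<rho> x)\<bar>" by simp
      moreover have "0 < exp (\<phi> x)" by simp
      ultimately have "\<bar>\<rho> x * \<phi> x\<bar> \<le> \<bar>\<rho> x * ln (\<rho> x)\<bar> + exp (\<phi> x) + (1 + \<bar>c\<bar>) * \<rho> x"
        using upper[of x] nonneg[of x] by (simp only: abs_le_iff distrib_right mult_1_left) linarith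
      then show ?case using order_trans[OF _ abs_ge_self] by simp
    qed
  qed simp
  then have "(\<integral>x. \<rho> x * \<phi> x \<partial>M) \<le> (\<integral>x. \<rho> x * ln (\<rho> x) + exp (\<phi> x) - \<rho> x \<partial>M)"
    using int upper by (intro integral_mono) auto
  also have "\<dots> = (\<integral>x. \<rho> x * ln (\<rho> x) \<partial>M) + (\<integral>x. exp (\<phi> x) \<partial>M) - (\<integral>x. \<rho> x \<partial>M)"
    using int by simp
  finally show "(\<integral>x. \<rho> x * \<phi> x \<partial>M) \<le> (\<integral>x. \<rho> x * ln (\<rho> x) \<partial>M) + (\<integral>x. exp (\<phi> x) \<partial>M) - (\<integral>x. \<rho> x \<partial>M)" .
qed

lemma (in prob_space) integral_ln_le_ln_integral:
  fixes g :: "'a \<Rightarrow> real"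
  assumes g: "integrable M g" and a: "0 < a" "AE x in M. a \<le> g x"
  shows "integrable M (\<lambda>x. ln (g x))" and "(\<integral>x. ln (g x) \<partial>M) \<le> ln (\<integral>x. g x \<partial>M)"
proof -
  show int: "integrable M (\<lambda>x. ln (g x))"
  proof (rule Bochner_Integration.integrable_bound)
    show "integrable M (\<lambda>x. \<bar>ln a\<bar> + \<bar>g x\<bar>)" using g by auto
    show "AE x in M. norm (ln (g x)) \<le> norm (\<bar>ln a\<bar> + \<bar>g x\<bar>)"
      using a(2)
    proof eventually_elim
      case (elim x)
      then have "ln a \<le> ln (g x)" "ln (g x) \<le> g x - 1" using a(1) by (auto intro: ln_le_minus_one)
      then show ?case by auto
    qed
  qed (use g in auto)
  have "- ln (\<integral>x. g x \<partial>M) \<le> (\<integral>x. - ln (g x) \<partial>M)"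
    by (rule jensens_inequality[where I="{0<..}" and a=0])
      (use g a int ln_concave in \<open>auto simp: concave_on_def\<close>)
  then show "(\<integral>x. ln (g x) \<partial>M) \<le> ln (\<integral>x. g x \<partial>M)" by simp
qed

lemma integral_xlnx_le_shift:
  fixes \<sigma> :: "'a \<Rightarrow> real"
  assumes "finite_measure M" and [measurable]: "\<sigma> \<in> borel_measurable M"
    and nonneg: "\<And>x. 0 \<le> \<sigma> x" and "0 < \<epsilon>"
    and int: "integrable M (\<lambda>x. \<sigma> x * ln (\<sigma> x + \<epsilon>))"
  shows "integrable M (\<lambda>x. \<sigma> x * ln (\<sigma> x))"
    and "(\<integral>x. \<sigma> x * ln (\<sigma> x) \<partial>M) \<le> (\<integral>x. \<sigma> x * ln (\<sigma> x + \<epsilon>) \<partial>M)"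
proof -
  interpret finite_measure M by fact
  have upper: "\<sigma> x * ln (\<sigma> x) \<le> \<sigma> x * ln (\<sigma> x + \<epsilon>)" for x
    using nonneg[of x] \<open>0 < \<epsilon>\<close> by (cases "\<sigma> x = 0") (auto intro: mult_left_mono)
  show int': "integrable M (\<lambda>x. \<sigma> x * ln (\<sigma> x))"
  proof (rule Bochner_Integration.integrable_bound)
    show "integrable M (\<lambda>x. 1 + \<bar>\<sigma> x * ln (\<sigma> x + \<epsilon>)\<bar>)" using int by auto
    show "AE x in M. norm (\<sigma> x * ln (\<sigma> x)) \<le> norm (1 + \<bar>\<sigma> x * ln (\<sigma> x + \<epsilon>)\<bar>)"
      using upper xlnx_ge_minus_one[OF nonneg] by (intro AE_I2) (smt (verit) real_norm_def)
  qed simp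
  show "(\<integral>x. \<sigma> x * ln (\<sigma> x) \<partial>M) \<le> (\<integral>x. \<sigma> x * ln (\<sigma> x + \<epsilon>) \<partial>M)"
    using upper by (intro integral_mono int int')
qed

lemma nn_integral_le_ennrealD:
  fixes f :: "'a \<Rightarrow> real"
  assumes [measurable]: "f \<in> borel_measurable M" and nonneg: "AE x in M. 0 \<le> f x"
    and le: "(\<integral>\<^sup>+x. ennreal (f x) \<partial>M) \<le> ennreal c" and "0 \<le> c"
  shows "integrable M f" and "(\<integral>x. f x \<partial>M) \<le> c"
proof -
  have fin: "(\<integral>\<^sup>+x. ennreal (f x) \<partial>M) < \<infinity>" using le by (simp add: le_less_trans)
  show int: "integrable M f"
    using fin nonneg by (intro integrableI_nonneg) auto
  have "ennreal (\<integral>x. f x \<partial>M) \<le> ennreal c"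
    using le by (simp add: nn_integral_eq_integral[OF int nonneg])
  moreover have "0 \<le> (\<integral>x. f x \<partial>M)" using nonneg by (rule integral_nonneg_AE)
  ultimately show "(\<integral>x. f x \<partial>M) \<le> c" using \<open>0 \<le> c\<close> by simp
qed

lemma Lnorm_eq_powr:
  assumes "(\<integral>\<^sup>+x. ennreal (\<bar>f x\<bar> powr r) \<partial>M) = ennreal c" and "0 \<le> c"
  shows "Lnorm M r f = ennreal (c powr (1 / r))"
  using assms by (simp add: Lnorm_def)

lemma nn_integral_powr_le_of_Lnorm_le:
  assumes le: "Lnorm M r f \<le> ennreal c" and "0 < r" "0 \<le> c"
  shows "(\<integral>\<^sup>+x. ennreal (\<bar>f x\<bar> powr r) \<partial>M) \<le> ennreal (c powr r)"
proof -
  define I where "I = (\<integral>\<^sup>+x. ennreal (\<bar>f x\<bar> powr r) \<partial>M)"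
  have "I \<noteq> \<infinity>" using le by (auto simp: Lnorm_def I_def top_unique)
  then obtain i where i: "I = ennreal i" "0 \<le> i" by (cases I) auto
  then have "i powr (1 / r) \<le> c" using le \<open>0 \<le> c\<close> by (simp add: Lnorm_def I_def[symmetric])
  then have "(i powr (1 / r)) powr r \<le> c powr r" using \<open>0 < r\<close> by (intro powr_mono2) auto
  then have "i \<le> c powr r" using \<open>0 < r\<close> i(2) by (simp add: powr_powr)
  then show ?thesis using i by (simp add: I_def ennreal_leI)
qed

abbreviation RN_density :: "'a measure \<Rightarrow> 'a measure \<Rightarrow> 'a \<Rightarrow> real" where
  "RN_density M N x \<equiv> enn2real (RN_deriv M N x)"

abbreviation KL_integrand :: "'a measure \<Rightarrow> 'a measure \<Rightarrow> 'a \<Rightarrow> real" where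
  "KL_integrand M N x \<equiv> RN_density M N x * ln (RN_density M N x)"

lemma (in prob_space)
  assumes "prob_space N" "absolutely_continuous M N" "sets N = sets M"
  shows integrable_RN_density: "integrable M (RN_density M N)"
    and integral_RN_density: "(\<integral>x. RN_density M N x \<partial>M) = 1"
proof -
  interpret N: prob_space N by fact
  have "sigma_finite_measure N" by unfold_locales
  note RN = RN_deriv_integrable[OF this assms(2,3), of "\<lambda>_. 1"] RN_deriv_integral[OF this assms(2,3), of "\<lambda>_. 1"]
  show "integrable M (RN_density M N)" using RN by simp
  show "(\<integral>x. RN_density M N x \<partial>M) = 1" using RN by (simp add: N.prob_space)
qed

lemma KL_eq_integral:
  assumes "absolutely_continuous \<pi> \<mu>" "sets \<mu> = sets \<pi>"
    and int: "integrable \<pi> (KL_integrand \<pi> \<mu>)"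
  shows "KL \<mu> \<pi> = ereal (\<integral>x. KL_integrand \<pi> \<mu> x \<partial>\<pi>)"
proof -
  have fin: "enn2ereal I = ereal (enn2real I)" if "I \<noteq> \<infinity>" for I :: ennreal
    using that by (cases I) auto
  show ?thesis
    using assms integrableD(2,3)[OF int]
    by (simp add: KL_def Let_def real_lebesgue_integral_def[OF int] fin)
qed

lemma KL_finiteD:
  assumes "prob_space \<pi>" "sets \<mu> = sets \<pi>" and fin: "KL \<mu> \<pi> \<noteq> \<infinity>"
  shows "absolutely_continuous \<pi> \<mu>"
    and "integrable \<pi> (KL_integrand \<pi> \<mu>)"
proof -
  interpret prob_space \<pi> by fact
  show ac: "absolutely_continuous \<pi> \<mu>" using fin by (auto simp: KL_def split: if_splits)
  let ?h = "KL_integrand \<pi> \<mu>"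
  have "(\<integral>\<^sup>+x. ennreal (- ?h x) \<partial>\<pi>) \<le> (\<integral>\<^sup>+x. 1 \<partial>\<pi>)"
    using xlnx_ge_minus_one[OF enn2real_nonneg] by (intro nn_integral_mono) simp
  then have neg: "(\<integral>\<^sup>+x. ennreal (- ?h x) \<partial>\<pi>) \<noteq> \<infinity>" by (auto simp: emeasure_space_1 top_unique)
  with fin ac assms(2) have "(\<integral>\<^sup>+x. ennreal (?h x) \<partial>\<pi>) \<noteq> \<infinity>"
    by (auto simp: KL_def Let_def)
  with neg show "integrable \<pi> ?h" by (simp add: real_integrable_def)
qed

locale stationary_kernel = prob_space \<pi> for \<pi> :: "'a measure" +
  fixes T :: "'a \<Rightarrow> 'a measure"
  assumes kernel: "T \<in> \<pi> \<rightarrow>\<^sub>M prob_algebra \<pi>"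
    and stationary: "bind \<pi> T = \<pi>"
begin

lemma kernel_subprob: "T \<in> \<pi> \<rightarrow>\<^sub>M subprob_algebra \<pi>"
  using measurable_prob_algebraD[OF kernel] .

lemma kernel_subprob_cong: "sets \<mu> = sets \<pi> \<Longrightarrow> T \<in> \<mu> \<rightarrow>\<^sub>M subprob_algebra \<pi>"
  using measurable_cong_sets[of \<mu> \<pi> "subprob_algebra \<pi>" "subprob_algebra \<pi>"] kernel_subprob by simp

lemma prob_space_kernel: "x \<in> space \<pi> \<Longrightarrow> prob_space (T x)"
  using measurable_space[OF kernel] by (simp add: space_prob_algebra)

lemma space_kernel: "x \<in> space \<pi> \<Longrightarrow> space (T x) = space \<pi>"
  using sets_eq_imp_space_eq[OF sets_kernel[OF kernel_subprob]] .

lemma measurable_kernel_fun: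
  assumes "f \<in> borel_measurable \<pi>"
  shows "kernel_fun T f \<in> borel_measurable \<pi>"
  unfolding kernel_fun_def
  using measurable_compose[OF kernel_subprob integral_measurable_subprob_algebra[OF assms]] .

lemma
  assumes "prob_space \<mu>" "sets \<mu> = sets \<pi>"
  shows prob_space_bind_kernel: "prob_space (bind \<mu> T)"
    and sets_bind_kernel: "sets (bind \<mu> T) = sets \<pi>"
proof -
  have "\<mu> \<in> space (prob_algebra \<pi>)" using assms by (simp add: space_prob_algebra)
  then show "prob_space (bind \<mu> T)" "sets (bind \<mu> T) = sets \<pi>"
    using prob_space_bind' sets_bind' kernel by blast+
qed

lemma absolutely_continuous_bind_kernel:
  assumes "prob_space \<mu>" "sets \<mu> = sets \<pi>" "absolutely_continuous \<pi> \<mu>"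
  shows "absolutely_continuous \<pi> (bind \<mu> T)"
  unfolding absolutely_continuous_def
proof
  fix A assume A: "A \<in> null_sets \<pi>"
  note T\<mu> = kernel_subprob_cong[OF assms(2)]
  have "(\<integral>\<^sup>+x. emeasure (T x) A \<partial>\<pi>) = emeasure (bind \<pi> T) A"
    using emeasure_bind[OF not_empty kernel_subprob null_setsD2[OF A]] by simp
  also have "\<dots> = 0" using A stationary by auto
  finally have "AE x in \<pi>. emeasure (T x) A = 0"
    using nn_integral_0_iff_AE[OF measurable_compose[OF kernel_subprob
        measurable_emeasure_subprob_algebra[OF null_setsD2[OF A]]]] by simp
  then have "AE x in \<mu>. emeasure (T x) A = 0"
    using absolutely_continuous_AE[OF assms(2,3)] by blast
  then have "(\<integral>\<^sup>+x. emeasure (T x) A \<partial>\<mu>) = 0"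
    by (simp add: nn_integral_cong_AE)
  then have "emeasure (bind \<mu> T) A = 0"
    using emeasure_bind[OF prob_space.not_empty[OF assms(1)] T\<mu> null_setsD2[OF A]] by simp
  then show "A \<in> null_sets (bind \<mu> T)"
    using A sets_bind_kernel[OF assms(1,2)] by auto
qed

lemma AE_integrable_kernel:
  fixes f :: "'a \<Rightarrow> real"
  assumes f: "integrable \<pi> f"
  shows "AE x in \<pi>. integrable (T x) f"
proof -
  have [measurable]: "f \<in> borel_measurable \<pi>" using f by simp
  have meas: "(\<lambda>x. \<integral>\<^sup>+y. norm (f y) \<partial>T x) \<in> borel_measurable \<pi>"
    by (rule measurable_compose[OF kernel_subprob nn_integral_measurable_subprob_algebra]) simp
  have "(\<integral>\<^sup>+x. \<integral>\<^sup>+y. norm (f y) \<partial>T x \<partial>\<pi>) = (\<integral>\<^sup>+y. norm (f y) \<partial>\<pi>)"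
    using nn_integral_bind[OF _ kernel_subprob, of "\<lambda>y. ennreal (norm (f y))"] stationary by simp
  also have "\<dots> < \<infinity>" using f by (simp add: integrable_iff_bounded)
  finally have "AE x in \<pi>. (\<integral>\<^sup>+y. norm (f y) \<partial>T x) \<noteq> \<infinity>"
    by (intro nn_integral_PInf_AE[OF meas]) simp
  with AE_space show ?thesis
  proof eventually_elim
    case (elim x)
    have "f \<in> borel_measurable (T x)"
      by (subst measurable_cong_sets[OF sets_kernel[OF kernel_subprob elim(1)] refl]) simp
    with elim(2) show "integrable (T x) f"
      by (simp add: integrable_iff_bounded less_top)
  qed
qed

lemma AE_integral_ln_kernel_le:
  fixes f :: "'a \<Rightarrow> real"
  assumes f: "integrable \<pi> f" and a: "0 < a" "\<And>x. x \<in> space \<pi> \<Longrightarrow> a \<le> f x"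
  shows "AE x in \<pi>. a \<le> kernel_fun T f x \<and> integrable (T x) (\<lambda>y. ln (f y))
    \<and> (\<integral>y. ln (f y) \<partial>T x) \<le> ln (kernel_fun T f x)"
  using AE_integrable_kernel[OF f] AE_space
proof eventually_elim
  case (elim x)
  interpret Tx: prob_space "T x" using prob_space_kernel[OF elim(2)] .
  have ge: "AE y in T x. a \<le> f y" using a(2) space_kernel[OF elim(2)] by (intro AE_I2) auto
  show ?case
    using Tx.integral_ge_const[OF elim(1) ge] Tx.integral_ln_le_ln_integral[OF elim(1) a(1) ge]
    by (simp add: kernel_fun_def)
qed

lemma nn_integral_ln_bind_le:
  fixes f :: "'a \<Rightarrow> real"
  assumes \<mu>: "prob_space \<mu>" "sets \<mu> = sets \<pi>" "absolutely_continuous \<pi> \<mu>"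
    and f: "integrable \<pi> f" "0 < a" "\<And>x. x \<in> space \<pi> \<Longrightarrow> a \<le> f x"
    and int: "integrable \<mu> (\<lambda>x. ln (kernel_fun T f x))"
  shows "(\<integral>\<^sup>+x. ennreal (ln (f x) - ln a) \<partial>bind \<mu> T)
    \<le> ennreal ((\<integral>x. ln (kernel_fun T f x) \<partial>\<mu>) - ln a)"
proof -
  interpret \<mu>: prob_space \<mu> by fact
  let ?h = "kernel_fun T f"
  note T\<mu> = kernel_subprob_cong[OF \<mu>(2)]
  have [measurable]: "f \<in> borel_measurable \<pi>" using f(1) by simp
  have "AE x in \<mu>. a \<le> ?h x \<and> integrable (T x) (\<lambda>y. ln (f y)) \<and> (\<integral>y. ln (f y) \<partial>T x) \<le> ln (?h x)"
    using absolutely_continuous_AE[OF \<mu>(2,3) AE_integral_ln_kernel_le[OF f]] .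
  then have AE\<mu>: "AE x in \<mu>. ln a \<le> ln (?h x) \<and>
      (\<integral>\<^sup>+y. ennreal (ln (f y) - ln a) \<partial>T x) \<le> ennreal (ln (?h x) - ln a)"
    using AE_space
  proof eventually_elim
    case (elim x)
    then have x: "x \<in> space \<pi>" using sets_eq_imp_space_eq[OF \<mu>(2)] by simp
    interpret Tx: prob_space "T x" using prob_space_kernel[OF x] .
    have nonneg: "AE y in T x. 0 \<le> ln (f y) - ln a"
      using f(2,3) space_kernel[OF x] by (intro AE_I2) (auto intro: ln_mono)
    have "(\<integral>\<^sup>+y. ennreal (ln (f y) - ln a) \<partial>T x) = ennreal ((\<integral>y. ln (f y) \<partial>T x) - ln a)"
      using elim by (subst nn_integral_eq_integral[OF _ nonneg]) (auto simp: Tx.prob_space)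
    then show ?case using elim f(2) by (auto intro!: ennreal_leI)
  qed
  have "(\<integral>\<^sup>+x. ennreal (ln (f x) - ln a) \<partial>bind \<mu> T) = (\<integral>\<^sup>+x. \<integral>\<^sup>+y. ennreal (ln (f y) - ln a) \<partial>T x \<partial>\<mu>)"
    by (rule nn_integral_bind[OF _ T\<mu>]) simp
  also have "\<dots> \<le> (\<integral>\<^sup>+x. ennreal (ln (?h x) - ln a) \<partial>\<mu>)"
    using AE\<mu> by (intro nn_integral_mono_AE) auto
  also have "\<dots> = ennreal ((\<integral>x. ln (?h x) \<partial>\<mu>) - ln a)"
    using AE\<mu> int by (subst nn_integral_eq_integral) (auto simp: \<mu>.prob_space)
  finally show ?thesis .
qed

lemma integral_ln_bind_le:
  fixes f :: "'a \<Rightarrow> real"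
  assumes \<mu>: "prob_space \<mu>" "sets \<mu> = sets \<pi>" "absolutely_continuous \<pi> \<mu>"
    and f: "integrable \<pi> f" "0 < a" "\<And>x. x \<in> space \<pi> \<Longrightarrow> a \<le> f x"
    and int: "integrable \<mu> (\<lambda>x. ln (kernel_fun T f x))"
  shows "integrable (bind \<mu> T) (\<lambda>x. ln (f x))"
    and "(\<integral>x. ln (f x) \<partial>bind \<mu> T) \<le> (\<integral>x. ln (kernel_fun T f x) \<partial>\<mu>)"
proof -
  interpret \<mu>: prob_space \<mu> by fact
  interpret \<nu>: prob_space "bind \<mu> T" using prob_space_bind_kernel[OF \<mu>(1,2)] .
  have [measurable]: "f \<in> borel_measurable \<pi>" using f(1) by simp
  have meas: "(\<lambda>x. ln (f x) - ln a) \<in> borel_measurable (bind \<mu> T)"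
    by (subst measurable_cong_sets[OF sets_bind_kernel[OF \<mu>(1,2)] refl]) simp
  have "AE x in \<mu>. a \<le> kernel_fun T f x"
    using absolutely_continuous_AE[OF \<mu>(2,3) AE_integral_ln_kernel_le[OF f]] by simp
  then have "ln a \<le> (\<integral>x. ln (kernel_fun T f x) \<partial>\<mu>)"
    using int f(2) by (intro \<mu>.integral_ge_const) (auto intro: ln_mono)
  moreover have "AE x in bind \<mu> T. 0 \<le> ln (f x) - ln a"
    using f(2,3) sets_eq_imp_space_eq[OF sets_bind_kernel[OF \<mu>(1,2)]] by (intro AE_I2) (auto intro: ln_mono)
  \<comment> \<open>After the shift by \<open>ln a\<close> the integrand is nonnegative, so that its integrability
    follows from the bound on its nonnegative integral.\<close>
  ultimately have shifted: "integrable (bind \<mu> T) (\<lambda>x. ln (f x) - ln a)"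
      "(\<integral>x. ln (f x) - ln a \<partial>bind \<mu> T) \<le> (\<integral>x. ln (kernel_fun T f x) \<partial>\<mu>) - ln a"
    using nn_integral_le_ennrealD[OF meas _ nn_integral_ln_bind_le[OF \<mu> f int]] by auto
  have eq: "(\<lambda>x. ln (f x)) = (\<lambda>x. (ln (f x) - ln a) + ln a)" by simp
  show "integrable (bind \<mu> T) (\<lambda>x. ln (f x))"
    by (subst eq) (intro Bochner_Integration.integrable_add shifted(1) \<nu>.integrable_const)
  then show "(\<integral>x. ln (f x) \<partial>bind \<mu> T) \<le> (\<integral>x. ln (kernel_fun T f x) \<partial>\<mu>)"
    using shifted by (simp add: \<nu>.prob_space)
qed

end

locale hypercontractive_kernel = stationary_kernel +
  fixes p q :: real
  assumes one_le_p: "1 \<le> p" and p_le_q: "p \<le> q"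
    and hypercontractive: "\<And>f. f \<in> borel_measurable \<pi> \<Longrightarrow> (\<integral>\<^sup>+x. ennreal (\<bar>f x\<bar> powr p) \<partial>\<pi>) < \<infinity> \<Longrightarrow>
      Lnorm \<pi> q (kernel_fun T f) \<le> Lnorm \<pi> p f"
begin

lemma integrable_kernel_fun_powr:
  fixes f :: "'a \<Rightarrow> real"
  assumes [measurable]: "f \<in> borel_measurable \<pi>"
    and norm: "(\<integral>\<^sup>+x. ennreal (\<bar>f x\<bar> powr p) \<partial>\<pi>) = ennreal c" "0 \<le> c"
  shows "integrable \<pi> (\<lambda>x. \<bar>kernel_fun T f x\<bar> powr q)"
    and "(\<integral>x. \<bar>kernel_fun T f x\<bar> powr q \<partial>\<pi>) \<le> c powr (q / p)"
proof -
  have "Lnorm \<pi> q (kernel_fun T f) \<le> ennreal (c powr (1 / p))"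
    using hypercontractive[of f] Lnorm_eq_powr[OF norm] norm(1) by simp
  then have "(\<integral>\<^sup>+x. ennreal (\<bar>kernel_fun T f x\<bar> powr q) \<partial>\<pi>) \<le> ennreal ((c powr (1 / p)) powr q)"
    using one_le_p p_le_q by (intro nn_integral_powr_le_of_Lnorm_le) auto
  also have "(c powr (1 / p)) powr q = c powr (q / p)" by (simp add: powr_powr)
  finally have le: "(\<integral>\<^sup>+x. ennreal (\<bar>kernel_fun T f x\<bar> powr q) \<partial>\<pi>) \<le> ennreal (c powr (q / p))" .
  have [measurable]: "kernel_fun T f \<in> borel_measurable \<pi>" by (rule measurable_kernel_fun) simp
  show "integrable \<pi> (\<lambda>x. \<bar>kernel_fun T f x\<bar> powr q)"
      and "(\<integral>x. \<bar>kernel_fun T f x\<bar> powr q \<partial>\<pi>) \<le> c powr (q / p)"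
    by (intro nn_integral_le_ennrealD[OF _ _ le]; simp)+
qed

lemma integral_ln_kernel_fun_le:
  fixes f :: "'a \<Rightarrow> real"
  assumes \<mu>: "prob_space \<mu>" "sets \<mu> = sets \<pi>" "absolutely_continuous \<pi> \<mu>"
    and ent: "integrable \<pi> (KL_integrand \<pi> \<mu>)"
    and f: "integrable \<pi> f" "0 < a" "\<And>x. x \<in> space \<pi> \<Longrightarrow> a \<le> f x"
    and norm: "(\<integral>\<^sup>+x. ennreal (\<bar>f x\<bar> powr p) \<partial>\<pi>) = ennreal c" "0 \<le> c"
  shows "integrable \<mu> (\<lambda>x. ln (kernel_fun T f x))"
    and "q * (\<integral>x. ln (kernel_fun T f x) \<partial>\<mu>)
      \<le> (\<integral>x. KL_integrand \<pi> \<mu> x \<partial>\<pi>) + c powr (q / p) - 1"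
proof -
  let ?\<rho> = "RN_density \<pi> \<mu>" and ?h = "kernel_fun T f"
  have q: "0 < q" using one_le_p p_le_q by simp
  have [measurable]: "f \<in> borel_measurable \<pi>" "?h \<in> borel_measurable \<pi>"
    using f(1) measurable_kernel_fun by auto
  have pos: "AE x in \<pi>. a \<le> ?h x"
    using AE_integral_ln_kernel_le[OF f] by simp
  have exp_eq: "AE x in \<pi>. exp (q * ln (?h x)) = \<bar>?h x\<bar> powr q"
    using pos by eventually_elim (use f(2) in \<open>simp add: powr_def mult.commute\<close>)
  note powr_q = integrable_kernel_fun_powr[OF _ norm]
  have exp_int: "integrable \<pi> (\<lambda>x. exp (q * ln (?h x)))"
    using integrable_cong_AE[OF _ _ exp_eq] powr_q(1) by simp
  have exp_le: "(\<integral>x. exp (q * ln (?h x)) \<partial>\<pi>) \<le> c powr (q / p)"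
    using integral_cong_AE[OF _ _ exp_eq] powr_q(2) by simp
  have lower: "AE x in \<pi>. q * ln a \<le> q * ln (?h x)"
    using pos by eventually_elim (use q f(2) in \<open>auto intro: ln_mono\<close>)
  note dens = integrable_RN_density[OF \<mu>(1,3,2)] integral_RN_density[OF \<mu>(1,3,2)]
  note gibbs = integral_mult_le_xlnx_exp[OF _ _ enn2real_nonneg dens(1) ent exp_int lower]
  have "integrable \<pi> (\<lambda>x. ?\<rho> x * ln (?h x))"
    using integrable_mult_right[OF gibbs(1), of "1 / q"] q by simp
  then show "integrable \<mu> (\<lambda>x. ln (?h x))"
    using RN_deriv_integrable[OF prob_space_imp_sigma_finite[OF \<mu>(1)] \<mu>(3,2)] by simp
  have "q * (\<integral>x. ln (?h x) \<partial>\<mu>) = (\<integral>x. ?\<rho> x * (q * ln (?h x)) \<partial>\<pi>)"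
    using RN_deriv_integral[OF prob_space_imp_sigma_finite[OF \<mu>(1)] \<mu>(3,2), of "\<lambda>x. ln (?h x)"]
    by (simp add: ac_simps)
  also have "\<dots> \<le> (\<integral>x. ?\<rho> x * ln (?\<rho> x) \<partial>\<pi>) + c powr (q / p) - 1"
    using gibbs(2) exp_le dens(2) by simp
  finally show "q * (\<integral>x. ln (?h x) \<partial>\<mu>) \<le> (\<integral>x. ?\<rho> x * ln (?\<rho> x) \<partial>\<pi>) + c powr (q / p) - 1" .
qed

lemma entropy_bind_le_perturbed:
  assumes \<mu>: "prob_space \<mu>" "sets \<mu> = sets \<pi>" "absolutely_continuous \<pi> \<mu>"
    and ent: "integrable \<pi> (KL_integrand \<pi> \<mu>)"
    and "0 < \<epsilon>"
  shows "integrable \<pi> (KL_integrand \<pi> (bind \<mu> T))"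
    and "(\<integral>x. KL_integrand \<pi> (bind \<mu> T) x \<partial>\<pi>)
      \<le> p / q * ((\<integral>x. KL_integrand \<pi> \<mu> x \<partial>\<pi>) + (1 + \<epsilon>) powr (q / p) - 1)"
proof -
  let ?\<nu> = "bind \<mu> T"
  let ?\<sigma> = "RN_density \<pi> ?\<nu>"
  define g where "g x = (?\<sigma> x + \<epsilon>) powr (1 / p)" for x
  have p: "0 < p" and q: "0 < q" using one_le_p p_le_q by auto
  have \<nu>: "prob_space ?\<nu>" "sets ?\<nu> = sets \<pi>" "absolutely_continuous \<pi> ?\<nu>"
    using prob_space_bind_kernel[OF \<mu>(1,2)] sets_bind_kernel[OF \<mu>(1,2)]
      absolutely_continuous_bind_kernel[OF \<mu>] by auto
  note dens = integrable_RN_density[OF \<nu>(1,3,2)] integral_RN_density[OF \<nu>(1,3,2)]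
  have \<sigma>_meas[measurable]: "?\<sigma> \<in> borel_measurable \<pi>" by measurable
  have [measurable]: "g \<in> borel_measurable \<pi>" unfolding g_def by measurable
  have pos: "0 < ?\<sigma> x + \<epsilon>" for x using \<open>0 < \<epsilon>\<close> by (simp add: add_nonneg_pos)
  have g_ge: "\<epsilon> powr (1 / p) \<le> g x" for x
    unfolding g_def using \<open>0 < \<epsilon>\<close> p by (intro powr_mono2) auto
  have g_int: "integrable \<pi> g"
  proof (rule Bochner_Integration.integrable_bound)
    show "integrable \<pi> (\<lambda>x. 1 + (?\<sigma> x + \<epsilon>))" using dens(1) by simp
    show "AE x in \<pi>. norm (g x) \<le> norm (1 + (?\<sigma> x + \<epsilon>))"
    proof (intro AE_I2)
      fix x
      have "g x \<le> 1 + (?\<sigma> x + \<epsilon>)"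
        unfolding g_def using pos[of x] one_le_p by (intro powr_le_one_plus) auto
      then show "norm (g x) \<le> norm (1 + (?\<sigma> x + \<epsilon>))"
        using pos[of x] by (simp add: g_def)
    qed
  qed simp
  have "(\<integral>\<^sup>+x. ennreal (\<bar>g x\<bar> powr p) \<partial>\<pi>) = (\<integral>\<^sup>+x. ennreal (?\<sigma> x + \<epsilon>) \<partial>\<pi>)"
    using pos p by (intro nn_integral_cong) (simp add: g_def powr_powr less_imp_le)
  also have "\<dots> = ennreal (1 + \<epsilon>)"
    using dens pos by (subst nn_integral_eq_integral) (auto simp: prob_space less_imp_le)
  finally have g_norm: "(\<integral>\<^sup>+x. ennreal (\<bar>g x\<bar> powr p) \<partial>\<pi>) = ennreal (1 + \<epsilon>)" .
  have a: "0 < \<epsilon> powr (1 / p)" using \<open>0 < \<epsilon>\<close> by simp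
  have "0 \<le> 1 + \<epsilon>" using \<open>0 < \<epsilon>\<close> by simp
  note cross = integral_ln_kernel_fun_le[OF \<mu> ent g_int a g_ge g_norm this]
  note jensen = integral_ln_bind_le[OF \<mu> g_int a g_ge cross(1)]
  have ln_g: "?\<sigma> x * ln (?\<sigma> x + \<epsilon>) = p * (?\<sigma> x * ln (g x))" for x
    using pos[of x] p by (simp add: g_def)
  have "integrable \<pi> (\<lambda>x. ?\<sigma> x * ln (g x))"
    using jensen(1) RN_deriv_integrable[OF prob_space_imp_sigma_finite[OF \<nu>(1)] \<nu>(3,2)] by simp
  then have int: "integrable \<pi> (\<lambda>x. ?\<sigma> x * ln (?\<sigma> x + \<epsilon>))"
    unfolding ln_g by simp
  note shift = integral_xlnx_le_shift[OF finite_measure_axioms \<sigma>_meas enn2real_nonneg \<open>0 < \<epsilon>\<close> int]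
  show "integrable \<pi> (\<lambda>x. ?\<sigma> x * ln (?\<sigma> x))" by (rule shift(1))
  have "(\<integral>x. ?\<sigma> x * ln (?\<sigma> x) \<partial>\<pi>) \<le> (\<integral>x. ?\<sigma> x * ln (?\<sigma> x + \<epsilon>) \<partial>\<pi>)"
    by (rule shift(2))
  also have "\<dots> = p * (\<integral>x. ln (g x) \<partial>?\<nu>)"
    unfolding ln_g using RN_deriv_integral[OF prob_space_imp_sigma_finite[OF \<nu>(1)] \<nu>(3,2)] by simp
  also have "\<dots> \<le> p * (\<integral>x. ln (kernel_fun T g x) \<partial>\<mu>)"
    using jensen(2) p by simp
  also have "\<dots> = p / q * (q * (\<integral>x. ln (kernel_fun T g x) \<partial>\<mu>))"
    using q by simp
  also have "\<dots> \<le> p / q * ((\<integral>x. KL_integrand \<pi> \<mu> x \<partial>\<pi>) + (1 + \<epsilon>) powr (q / p) - 1)"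
    using cross(2) p q by (intro mult_left_mono) auto
  finally show "(\<integral>x. ?\<sigma> x * ln (?\<sigma> x) \<partial>\<pi>)
      \<le> p / q * ((\<integral>x. KL_integrand \<pi> \<mu> x \<partial>\<pi>) + (1 + \<epsilon>) powr (q / p) - 1)" .
qed

lemma entropy_bind_le:
  assumes \<mu>: "prob_space \<mu>" "sets \<mu> = sets \<pi>" "absolutely_continuous \<pi> \<mu>"
    and ent: "integrable \<pi> (KL_integrand \<pi> \<mu>)"
  shows "integrable \<pi> (KL_integrand \<pi> (bind \<mu> T))"
    and "(\<integral>x. KL_integrand \<pi> (bind \<mu> T) x \<partial>\<pi>)
      \<le> p / q * (\<integral>x. KL_integrand \<pi> \<mu> x \<partial>\<pi>)"
proof -
  note perturbed = entropy_bind_le_perturbed[OF \<mu> ent]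
  show "integrable \<pi> (KL_integrand \<pi> (bind \<mu> T))"
    using perturbed(1)[of 1] by simp
  let ?H = "\<integral>x. KL_integrand \<pi> \<mu> x \<partial>\<pi>"
  have "((\<lambda>\<epsilon>. p / q * (?H + (1 + \<epsilon>) powr (q / p) - 1)) \<longlongrightarrow> p / q * (?H + (1 + 0) powr (q / p) - 1)) (at_right 0)"
    by (intro tendsto_intros) auto
  moreover have "eventually (\<lambda>\<epsilon>. (\<integral>x. KL_integrand \<pi> (bind \<mu> T) x \<partial>\<pi>)
      \<le> p / q * (?H + (1 + \<epsilon>) powr (q / p) - 1)) (at_right 0)"
    using eventually_at_right_less by (rule eventually_mono) (rule perturbed(2))
  ultimately show "(\<integral>x. KL_integrand \<pi> (bind \<mu> T) x \<partial>\<pi>) \<le> p / q * ?H"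
    using tendsto_lowerbound[OF _ _ trivial_limit_at_right_real] by simp
qed

end

theorem theorem2p1:
  fixes \<pi> :: "'a measure" and T :: "'a \<Rightarrow> 'a measure" and p q :: real
  assumes "prob_space \<pi>"
    and "T \<in> \<pi> \<rightarrow>\<^sub>M prob_algebra \<pi>"
    and "bind \<pi> T = \<pi>"
    and "1 \<le> p" and "p \<le> q"
    and "\<And>f. f \<in> borel_measurable \<pi> \<Longrightarrow> (\<integral>\<^sup>+ x. ennreal (\<bar>f x\<bar> powr p) \<partial>\<pi>) < \<infinity> \<Longrightarrow>
           Lnorm \<pi> q (kernel_fun T f) \<le> Lnorm \<pi> p f"
  shows "\<And>\<mu>. prob_space \<mu> \<Longrightarrow> sets \<mu> = sets \<pi> \<Longrightarrow>
           KL (bind \<mu> T) \<pi> \<le> ereal (p / q) * KL \<mu> \<pi>"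
proof -
  fix \<mu> :: "'a measure"
  assume \<mu>: "prob_space \<mu>" "sets \<mu> = sets \<pi>"
  interpret hypercontractive_kernel \<pi> T p q
    by (intro hypercontractive_kernel.intro stationary_kernel.intro
        stationary_kernel_axioms.intro hypercontractive_kernel_axioms.intro) (fact assms)+
  show "KL (bind \<mu> T) \<pi> \<le> ereal (p / q) * KL \<mu> \<pi>"
  proof (cases "KL \<mu> \<pi> = \<infinity>")
    case True
    then show ?thesis using one_le_p p_le_q by simp
  next
    case False
    note finite = KL_finiteD[OF assms(1) \<mu>(2) False]
    note \<mu>' = \<mu> finite(1)
    have "KL (bind \<mu> T) \<pi> = ereal (\<integral>x. KL_integrand \<pi> (bind \<mu> T) x \<partial>\<pi>)"
      using absolutely_continuous_bind_kernel[OF \<mu>'] sets_bind_kernel[OF \<mu>]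
        entropy_bind_le(1)[OF \<mu>' finite(2)] by (rule KL_eq_integral)
    also have "\<dots> \<le> ereal (p / q * (\<integral>x. KL_integrand \<pi> \<mu> x \<partial>\<pi>))"
      using entropy_bind_le(2)[OF \<mu>' finite(2)] by simp
    also have "\<dots> = ereal (p / q) * KL \<mu> \<pi>"
      using KL_eq_integral[OF finite(1) \<mu>(2) finite(2)] by simp
    finally show ?thesis .
  qed
qed

end
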